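(* Let $k$ be a field and let $d,m$ be integers with $d$ odd and $5\le d<m-1$. Set $a=(d+1)/2$. Then \[ k[\Delta(d,m)]\cong k[x_1,\dots,x_m]/(I_{a,2,m-1},\; x_1x_m I_{a-1,3,m-2}). \]
   Context: For integers $2\le d<m$, $\Delta(d,m)$ denotes the boundary simplicial complex of the cyclic polytope $C_d(m)$, the convex hull in $\mathbb{R}^d$ of $f(t_1),\dots,f(t_m)$ with $t_1<\dots<t_m$ real and $f(t)=(t,t^2,\dots,t^d)$; vertex $i$ corresponds to $f(t_i)$, and the faces are $\emptyset$ and the vertex sets of proper faces of $C_d(m)$. $k[\Delta]=k[x_1,\dots,x_m]/I_\Delta$ is the Stanley–Reisner ring, $I_\Delta$ being generated by the squarefree monomials $\prod_{t\in W}x_t$ with $W\notin\Delta$. For positive integers $a,p,q$ with $p<q$ and $2a\le q-p+2$, $I_{a,p,q}$ denotes the ideal generated by all monomials $x_{t_1}\cdots x_{t_a}$ with $p\le t_1$, $t_a\le q$ and $t_j+2\le t_{j+1}$ for $1\le j\le a-1$. *)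

theory Defs
  imports "HOL-Analysis.Analysis" "HOL-Library.Poly_Mapping" "HOL-Algebra.QuotRing"
begin

type_synonym 'k mpoly = "(nat \<Rightarrow>\<^sub>0 nat) \<Rightarrow>\<^sub>0 'k"

definition pvar :: "nat \<Rightarrow> 'k::comm_ring_1 mpoly" where
  "pvar i = Poly_Mapping.single (Poly_Mapping.single i 1) 1"

definition pconst :: "'k::comm_ring_1 \<Rightarrow> 'k mpoly" where
  "pconst c = Poly_Mapping.single 0 c"

definition poly_ring_m :: "nat \<Rightarrow> ('k::field mpoly) ring" where
  "poly_ring_m m = \<lparr>carrier = {p. \<forall>\<mu>\<in>Poly_Mapping.keys p. Poly_Mapping.keys \<mu> \<subseteq> {1..m}},
                    monoid.mult = (*), one = 1, zero = 0, add = (+)\<rparr>"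

definition sqf_monomial :: "nat set \<Rightarrow> 'k::comm_ring_1 mpoly" where
  "sqf_monomial W = (\<Prod>t\<in>W. pvar t)"

text \<open>Isomorphism of k-algebras between two quotients of k[x_1,...,x_m]:
  a ring isomorphism that is compatible with the k-structure (sends the class of
  each constant c to the class of c).\<close>
definition kalg_iso_quot :: "nat \<Rightarrow> 'k::field mpoly set \<Rightarrow> 'k mpoly set \<Rightarrow> bool" where
  "kalg_iso_quot m I J \<longleftrightarrow>
     (\<exists>\<phi> \<in> ring_iso (poly_ring_m m Quot I) (poly_ring_m m Quot J).
        \<forall>c. \<phi> (I +>\<^bsub>poly_ring_m m\<^esub> pconst c) = J +>\<^bsub>poly_ring_m m\<^esub> pconst c)"

text \<open>Coordinates of R^d are represented by a finite type 'n with d = CARD('n); we fix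
  a numbering of the coordinates by 1..d.\<close>
definition coord_index :: "'n::finite \<Rightarrow> nat" where
  "coord_index = (SOME r. bij_betw r (UNIV::'n set) {1..CARD('n)})"

definition moment :: "real \<Rightarrow> real ^ 'n::finite" where
  "moment s = (\<chi> j. s ^ coord_index j)"

definition cyclic_polytope :: "'n::finite itself \<Rightarrow> (nat \<Rightarrow> real) \<Rightarrow> nat \<Rightarrow> (real ^ 'n) set" where
  "cyclic_polytope _ t m = convex hull ((\<lambda>i. moment (t i) :: real ^ 'n) ` {1..m})"

text \<open>Faces of the boundary complex Delta(d,m): vertex sets of proper faces of C_d(m)
  (the empty face included).\<close>
definition cyclic_boundary_complex :: "'n::finite itself \<Rightarrow> (nat \<Rightarrow> real) \<Rightarrow> nat \<Rightarrow> nat set set" where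
  "cyclic_boundary_complex T t m =
     {W. \<exists>F. F face_of cyclic_polytope T t m \<and> F \<noteq> cyclic_polytope T t m \<and>
             W = {i\<in>{1..m}. (moment (t i) :: real ^ 'n) \<in> F}}"

definition stanley_reisner_ideal :: "nat \<Rightarrow> nat set set \<Rightarrow> 'k::field mpoly set" where
  "stanley_reisner_ideal m \<Delta> =
     genideal (poly_ring_m m) {sqf_monomial W | W. W \<subseteq> {1..m} \<and> W \<notin> \<Delta>}"

text \<open>Generators of I_{a,p,q}: x_{t_1}...x_{t_a} with p <= t_1, t_a <= q, t_j + 2 <= t_{j+1};
  the index sequence is recorded as the set of its entries.\<close>
definition gens_I :: "nat \<Rightarrow> nat \<Rightarrow> nat \<Rightarrow> 'k::comm_ring_1 mpoly set" where
  "gens_I a p q = {sqf_monomial S | S. S \<subseteq> {p..q} \<and> card S = a \<and>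
                      (\<forall>x\<in>S. \<forall>y\<in>S. x < y \<longrightarrow> x + 2 \<le> y)}"

end

theory Submission
  imports Defs "HOL-Computational_Algebra.Polynomial"
begin

text \<open>The affine functions \<open>b - h \<bullet> f(s)\<close> on the moment curve are exactly the real
  polynomials of degree at most \<open>d\<close> in \<open>s\<close>. Hence \<open>W\<close> is a face of \<open>C\<^sub>d(m)\<close> iff some such
  polynomial vanishes at the \<open>t\<^sub>i\<close> with \<open>i \<in> W\<close> and is positive at the other \<open>t\<^sub>j\<close>.

  If \<open>W\<close> contains the support of a generator of the right-hand ideal, there are \<open>d + 2\<close>
  indices at which such a polynomial would have to alternate in sign; its divided difference
  over these nodes vanishes, so it vanishes at all of them and is zero. If \<open>W\<close> contains no such
  support, the runs of \<open>W\<close> yield a set \<open>E \<subseteq> W\<close> with \<open>|W| + |E| \<le> 2a - 1 = d\<close> satisfying Gale's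
  evenness condition, and the product of the factors \<open>s - t\<^sub>i\<close> over \<open>W\<close> and over \<open>E\<close>, with a
  suitable sign, is such a polynomial. So the non-faces are exactly the sets containing one of
  these supports, and the two ideals coincide.\<close>

section \<open>Divided differences and sign-alternating polynomials\<close>

lemma sign_prod_diff_pos:
  fixes t :: "'a::linorder \<Rightarrow> real"
  assumes "strict_mono_on B t" "finite A" "A \<subseteq> B" "j \<in> B" "j \<notin> A"
  shows "0 < (-1) ^ card {i\<in>A. j < i} * (\<Prod>i\<in>A. t j - t i)"
  using assms(2,3,5)
proof (induction A rule: finite_induct)
  case (insert x A)
  let ?s = "(-1::real) ^ card {i\<in>A. j < i} * (\<Prod>i\<in>A. t j - t i)"
  have pos: "0 < ?s"
    using insert by simp
  have x: "x \<in> B" "x \<noteq> j"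
    using insert.prems by auto
  show ?case
  proof (cases "j < x")
    case True
    then have "{i\<in>insert x A. j < i} = insert x {i\<in>A. j < i}"
      by auto
    then have "(-1) ^ card {i\<in>insert x A. j < i} * (\<Prod>i\<in>insert x A. t j - t i)
        = (t x - t j) * ?s"
      using insert.hyps by (simp add: algebra_simps)
    moreover have "t j < t x"
      using strict_mono_onD[OF assms(1) assms(4) x(1) True] .
    ultimately show ?thesis
      using pos by simp
  next
    case False
    then have "x < j"
      using x(2) by simp
    then have "{i\<in>insert x A. j < i} = {i\<in>A. j < i}"
      by auto
    then have "(-1) ^ card {i\<in>insert x A. j < i} * (\<Prod>i\<in>insert x A. t j - t i)
        = (t j - t x) * ?s"
      using insert.hyps by simp
    moreover have "t x < t j"
      using strict_mono_onD[OF assms(1) x(1) assms(4) \<open>x < j\<close>] .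
    ultimately show ?thesis
      using pos by simp
  qed
qed simp

text \<open>The leading coefficient of the polynomial interpolating \<open>f\<close> at the nodes \<open>S\<close>.\<close>
definition divided_difference :: "real set \<Rightarrow> (real \<Rightarrow> real) \<Rightarrow> real" where
  "divided_difference S f = (\<Sum>k\<in>S. f k / (\<Prod>l\<in>S - {k}. k - l))"

lemma divided_difference_add:
  "divided_difference S (\<lambda>x. f x + g x) = divided_difference S f + divided_difference S g"
  unfolding divided_difference_def by (simp add: add_divide_distrib sum.distrib)

lemma divided_difference_diff:
  "divided_difference S (\<lambda>x. f x - g x) = divided_difference S f - divided_difference S g"
  unfolding divided_difference_def by (simp add: diff_divide_distrib sum_subtractf)

lemma divided_difference_cmult:
  "divided_difference S (\<lambda>x. c * f x) = c * divided_difference S f"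
  unfolding divided_difference_def by (simp add: sum_distrib_left)

lemma divided_difference_singleton: "divided_difference {b} f = f b"
  unfolding divided_difference_def by simp

lemma divided_difference_mult_linear:
  assumes "finite S" "a \<in> S"
  shows "divided_difference S (\<lambda>x. (x - a) * f x) = divided_difference (S - {a}) f"
proof -
  have "divided_difference S (\<lambda>x. (x - a) * f x)
      = (\<Sum>k\<in>S - {a}. (k - a) * f k / (\<Prod>l\<in>S - {k}. k - l))"
    unfolding divided_difference_def by (simp add: sum.remove[OF assms])
  also have "\<dots> = (\<Sum>k\<in>S - {a}. f k / (\<Prod>l\<in>S - {a} - {k}. k - l))"
  proof (rule sum.cong[OF refl])
    fix k assume k: "k \<in> S - {a}"
    have "(\<Prod>l\<in>S - {k}. k - l) = (k - a) * (\<Prod>l\<in>S - {a} - {k}. k - l)"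
      using assms k by (subst prod.remove[of _ a]) (auto intro: prod.cong)
    then show "(k - a) * f k / (\<Prod>l\<in>S - {k}. k - l) = f k / (\<Prod>l\<in>S - {a} - {k}. k - l)"
      using k by simp
  qed
  finally show ?thesis
    unfolding divided_difference_def .
qed

lemma divided_difference_const:
  assumes "finite S" "2 \<le> card S"
  shows "divided_difference S (\<lambda>_. 1) = 0"
  using assms
proof (induction "card S" arbitrary: S rule: less_induct)
  case less
  obtain a b where ab: "a \<in> S" "b \<in> S" "a \<noteq> b"
    using less.prems by (metis card_le_Suc0_iff_eq not_less_eq_eq numeral_2_eq_2)
  have smaller: "divided_difference (S - {a}) (\<lambda>_. 1) = divided_difference (S - {b}) (\<lambda>_. 1)"
  proof (cases "card S = 2")
    case True
    then have "S - {a} = {b}" "S - {b} = {a}"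
      using ab by (auto simp: card_2_iff)
    then show ?thesis
      by (simp add: divided_difference_singleton)
  next
    case False
    then show ?thesis
      using less ab by (simp add: card_Diff_singleton)
  qed
  have "(b - a) * divided_difference S (\<lambda>_. 1)
      = divided_difference S (\<lambda>x. (x - a) * 1 - (x - b) * 1)"
    by (simp add: divided_difference_cmult[symmetric])
  also have "\<dots> = 0"
    using smaller by (simp only: divided_difference_diff divided_difference_mult_linear less.prems ab)
  finally show ?case
    using ab by simp
qed

lemma divided_difference_power:
  assumes "finite S" "e + 2 \<le> card S"
  shows "divided_difference S (\<lambda>x. x ^ e) = 0"
  using assms
proof (induction e arbitrary: S)
  case 0
  then show ?case
    using divided_difference_const by simp
next
  case (Suc e)
  obtain a where a: "a \<in> S"
    using Suc.prems by fastforce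
  have "divided_difference S (\<lambda>x. x ^ Suc e) = divided_difference S (\<lambda>x. (x - a) * x ^ e + a * x ^ e)"
    by (simp add: algebra_simps)
  also have "\<dots> = divided_difference (S - {a}) (\<lambda>x. x ^ e) + a * divided_difference S (\<lambda>x. x ^ e)"
    by (simp only: divided_difference_add divided_difference_cmult
        divided_difference_mult_linear[OF Suc.prems(1) a])
  also have "\<dots> = 0"
    using Suc a by simp
  finally show ?case .
qed

lemma divided_difference_poly:
  assumes "finite S" "degree p + 2 \<le> card S"
  shows "divided_difference S (poly p) = 0"
proof -
  have "divided_difference S (poly p)
      = (\<Sum>i\<le>degree p. coeff p i * divided_difference S (\<lambda>x. x ^ i))"
    unfolding divided_difference_def poly_altdef sum_divide_distrib
    by (subst sum.swap) (simp add: sum_distrib_left)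
  also have "\<dots> = 0"
    using divided_difference_power[OF assms(1)] assms(2) by simp
  finally show ?thesis .
qed

lemma alternating_nonneg_poly_eq_0:
  fixes p :: "real poly"
  assumes "finite S" "degree p + 2 \<le> card S"
    and alternating: "\<And>s. s \<in> S \<Longrightarrow> 0 \<le> (-1) ^ card {l\<in>S. s < l} * poly p s"
  shows "p = 0"
proof (rule poly_eqI_degree)
  define D where "D k = (\<Prod>l\<in>S - {k}. k - l)" for k
  have sign_D: "0 < (-1) ^ card {l\<in>S. k < l} * D k" if "k \<in> S" for k
  proof -
    have "{l\<in>S. k < l} = {l\<in>S - {k}. k < l}"
      by auto
    then show ?thesis
      using sign_prod_diff_pos[OF strict_mono_on_id, of "S - {k}" "insert k S" k] assms(1)
      unfolding D_def by auto
  qed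
  have nonneg: "0 \<le> poly p k / D k" if "k \<in> S" for k
  proof -
    have "poly p k / D k
        = ((-1) ^ card {l\<in>S. k < l} * poly p k) / ((-1) ^ card {l\<in>S. k < l} * D k)"
      by simp
    also have "0 \<le> \<dots>"
      using alternating[OF that] sign_D[OF that] by (rule divide_nonneg_pos)
    finally show ?thesis .
  qed
  have "(\<Sum>k\<in>S. poly p k / D k) = 0"
    using divided_difference_poly[OF assms(1,2)] unfolding divided_difference_def D_def .
  then have quotient_0: "\<forall>k\<in>S. poly p k / D k = 0"
    using sum_nonneg_eq_0_iff[OF assms(1), of "\<lambda>k. poly p k / D k"] nonneg by simp
  show "poly p x = poly 0 x" if "x \<in> S" for x
  proof -
    have "D x \<noteq> 0"
      using sign_D[OF that] by auto
    then show ?thesis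
      using quotient_0 that by auto
  qed
qed (use assms(2) in simp_all)

section \<open>Faces of the cyclic polytope and polynomials on the moment curve\<close>

lemma bij_coord_index: "bij_betw (coord_index :: 'n::finite \<Rightarrow> nat) UNIV {1..CARD('n)}"
proof -
  have "\<exists>r. bij_betw r (UNIV::'n set) {1..CARD('n)}"
    by (rule finite_same_card_bij) auto
  then show ?thesis
    unfolding coord_index_def by (rule someI_ex)
qed

lemma inner_moment: "h \<bullet> (moment s :: real^'n::finite) = (\<Sum>j\<in>UNIV. h $ j * s ^ coord_index j)"
  by (simp add: inner_vec_def moment_def)

lemma affine_moment_poly:
  obtains p :: "real poly"
  where "degree p \<le> CARD('n::finite)" "\<And>s. poly p s = b - h \<bullet> (moment s :: real^'n)"
proof
  let ?p = "[:b:] - (\<Sum>j\<in>UNIV. monom (h $ j) (coord_index (j::'n)))"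
  have "coord_index j \<le> CARD('n)" for j :: 'n
    using bij_betw_apply[OF bij_coord_index[where 'n='n]] by simp
  then show "degree ?p \<le> CARD('n)"
    by (intro degree_diff_le degree_sum_le order.trans[OF degree_monom_le]) simp_all
  show "poly ?p s = b - h \<bullet> (moment s :: real^'n)" for s
    by (simp add: poly_sum poly_monom inner_moment)
qed

lemma poly_affine_moment:
  fixes p :: "real poly"
  assumes "degree p \<le> CARD('n::finite)"
  obtains h :: "real^'n" and b where "\<And>s. poly p s = b - h \<bullet> moment s"
proof
  fix s
  have "poly p s = (\<Sum>e\<le>CARD('n). coeff p e * s ^ e)"
    unfolding poly_altdef using assms
    by (intro sum.mono_neutral_left) (auto simp: coeff_eq_0)
  also have "\<dots> = coeff p 0 + (\<Sum>e\<in>{1..CARD('n)}. coeff p e * s ^ e)"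
    by (simp add: atMost_atLeast0 sum.atLeast_Suc_atMost)
  also have "(\<Sum>e\<in>{1..CARD('n)}. coeff p e * s ^ e)
      = (\<Sum>j\<in>UNIV. coeff p (coord_index (j::'n)) * s ^ coord_index j)"
    by (rule sum.reindex_bij_betw[OF bij_coord_index, symmetric])
  finally show "poly p s = coeff p 0 - (\<chi> j. - coeff p (coord_index j)) \<bullet> (moment s :: real^'n)"
    by (simp add: inner_moment sum_negf)
qed

lemma moment_in_cyclic_polytope:
  "i \<in> {1..m} \<Longrightarrow> (moment (t i) :: real^'n::finite) \<in> cyclic_polytope TYPE('n) t m"
  unfolding cyclic_polytope_def by (rule hull_inc) simp

lemma cyclic_face_supporting_poly:
  assumes "W \<in> cyclic_boundary_complex TYPE('n::finite) t m"
  obtains p :: "real poly"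
  where "degree p \<le> CARD('n)" "p \<noteq> 0"
    "\<And>i. i \<in> {1..m} \<Longrightarrow> 0 \<le> poly p (t i)" "\<And>i. i \<in> W \<Longrightarrow> poly p (t i) = 0"
proof -
  define P where "P = cyclic_polytope TYPE('n) t m"
  obtain F where F: "F face_of P" "F \<noteq> P" "W = {i\<in>{1..m}. (moment (t i) :: real^'n) \<in> F}"
    using assms unfolding cyclic_boundary_complex_def P_def by blast
  have "polytope P"
    unfolding P_def cyclic_polytope_def polytope_def by auto
  then have "F exposed_face_of P"
    using exposed_face_of_polyhedron polytope_imp_polyhedron F(1) by blast
  then obtain h b where hb: "P \<subseteq> {x. h \<bullet> x \<le> b}" "F = P \<inter> {x. h \<bullet> x = b}"
    unfolding exposed_face_of_def by blast
  obtain p where p: "degree p \<le> CARD('n)" "\<And>s. poly p s = b - h \<bullet> (moment s :: real^'n)"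
    using affine_moment_poly by blast
  have vertex: "moment (t i) \<in> P" if "i \<in> {1..m}" for i
    unfolding P_def using that by (rule moment_in_cyclic_polytope)
  show thesis
  proof (rule that[OF p(1)])
    show "0 \<le> poly p (t i)" if "i \<in> {1..m}" for i
      using hb(1) vertex[OF that] p(2) by auto
    show "poly p (t i) = 0" if "i \<in> W" for i
      using that F(3) hb(2) p(2) by auto
    show "p \<noteq> 0"
    proof
      assume "p = 0"
      then have "(\<lambda>i. moment (t i)) ` {1..m} \<subseteq> F"
        using hb(2) p(2) vertex by auto
      then have "P \<subseteq> F"
        unfolding P_def cyclic_polytope_def
        using face_of_imp_convex[OF F(1)] by (rule hull_minimal)
      then show False
        using F(1,2) face_of_imp_subset by blast
    qed
  qed
qed

lemma supporting_poly_cyclic_face: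
  fixes p :: "real poly"
  assumes "degree p \<le> CARD('n::finite)" "W \<subseteq> {1..m}" "j0 \<in> {1..m} - W"
    and zero: "\<And>i. i \<in> W \<Longrightarrow> poly p (t i) = 0"
    and pos: "\<And>j. j \<in> {1..m} - W \<Longrightarrow> 0 < poly p (t j)"
  shows "W \<in> cyclic_boundary_complex TYPE('n) t m"
proof -
  obtain h :: "real^'n" and b where hb: "\<And>s. poly p s = b - h \<bullet> moment s"
    using poly_affine_moment[OF assms(1)] by blast
  define P where "P = cyclic_polytope TYPE('n) t m"
  have vertex: "moment (t i) \<in> P" if "i \<in> {1..m}" for i
    unfolding P_def using that by (rule moment_in_cyclic_polytope)
  have "0 \<le> poly p (t i)" if "i \<in> {1..m}" for i
    using zero pos that by (cases "i \<in> W") (auto intro: less_imp_le)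
  then have "(\<lambda>i. moment (t i)) ` {1..m} \<subseteq> {x. h \<bullet> x \<le> b}"
    using hb by auto
  then have "P \<subseteq> {x. h \<bullet> x \<le> b}"
    unfolding P_def cyclic_polytope_def by (rule hull_minimal) (rule convex_halfspace_le)
  then have face: "P \<inter> {x. h \<bullet> x = b} face_of P"
    by (intro face_of_Int_supporting_hyperplane_le)
      (auto simp: P_def cyclic_polytope_def)
  have "moment (t j0) \<notin> P \<inter> {x. h \<bullet> x = b}"
    using pos[OF assms(3)] hb[of "t j0"] by auto
  then have proper: "P \<inter> {x. h \<bullet> x = b} \<noteq> P"
    using vertex assms(3) by blast
  have "i \<in> W \<longleftrightarrow> moment (t i) \<in> P \<inter> {x. h \<bullet> x = b}" if "i \<in> {1..m}" for i
    using zero[of i] pos[of i] hb[of "t i"] vertex[OF that] that by auto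
  then have "W = {i\<in>{1..m}. moment (t i) \<in> P \<inter> {x. h \<bullet> x = b}}"
    using assms(2) by blast
  then show ?thesis
    unfolding cyclic_boundary_complex_def P_def[symmetric] using face proper by blast
qed

lemma card_greater_image:
  fixes t :: "'a::linorder \<Rightarrow> 'b::linorder"
  assumes "strict_mono_on A t" "K \<subseteq> A" "k \<in> A"
  shows "card {l\<in>t ` K. t k < l} = card {l\<in>K. k < l}"
proof -
  have "{l\<in>t ` K. t k < l} = t ` {l\<in>K. k < l}"
    using strict_mono_on_less[OF assms(1)] assms(2,3) by blast
  moreover have "inj_on t {l\<in>K. k < l}"
    by (rule inj_on_subset[OF strict_mono_on_imp_inj_on[OF assms(1)]]) (use assms(2) in auto)
  ultimately show ?thesis
    by (simp add: card_image)
qed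

lemma cyclic_face_not_alternating:
  fixes t :: "nat \<Rightarrow> real"
  assumes mono: "strict_mono_on {1..m} t" and face: "W \<in> cyclic_boundary_complex TYPE('n::finite) t m"
    and K: "K \<subseteq> {1..m}" "CARD('n) + 2 \<le> card K"
    and parity: "\<And>k. k \<in> K - W \<Longrightarrow> even (card {l\<in>K. k < l} + c)"
  shows False
proof -
  obtain p where p: "degree p \<le> CARD('n)" "p \<noteq> 0"
    "\<And>i. i \<in> {1..m} \<Longrightarrow> 0 \<le> poly p (t i)" "\<And>i. i \<in> W \<Longrightarrow> poly p (t i) = 0"
    using cyclic_face_supporting_poly[OF face] by blast
  have inj: "inj_on t K"
    using strict_mono_on_imp_inj_on[OF mono] K(1) by (rule inj_on_subset)
  have "smult ((-1) ^ c) p = 0"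
  proof (rule alternating_nonneg_poly_eq_0)
    show "finite (t ` K)"
      using K(1) finite_subset by blast
    show "degree (smult ((-1) ^ c) p) + 2 \<le> card (t ` K)"
      using p(1) K(2) card_image[OF inj] by simp
    fix s assume "s \<in> t ` K"
    then obtain k where k: "k \<in> K" "s = t k"
      by blast
    have above: "card {l\<in>t ` K. s < l} = card {l\<in>K. k < l}"
      using card_greater_image[OF mono K(1)] k K(1) by blast
    show "0 \<le> (-1) ^ card {l\<in>t ` K. s < l} * poly (smult ((-1) ^ c) p) s"
    proof (cases "k \<in> W")
      case True
      then show ?thesis
        using p(4) k by simp
    next
      case False
      then have "(-1::real) ^ card {l\<in>K. k < l} * (-1) ^ c = 1"
        using parity k(1) by (simp flip: power_add)
      moreover have "(-1) ^ card {l\<in>t ` K. s < l} * poly (smult ((-1) ^ c) p) s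
          = ((-1) ^ card {l\<in>K. k < l} * (-1) ^ c) * poly p (t k)"
        using above k(2) by (simp add: mult.assoc)
      ultimately show ?thesis
        using p(3) k(1) K(1) by auto
    qed
  qed
  then show False
    using p(2) by simp
qed

lemma gale_parity_cyclic_face:
  fixes t :: "nat \<Rightarrow> real"
  assumes mono: "strict_mono_on {1..m} t" and W: "W \<subseteq> {1..m}" and E: "E \<subseteq> W"
    and card: "card W + card E \<le> CARD('n::finite)" and j0: "j0 \<in> {1..m} - W"
    and parity: "\<And>j. j \<in> {1..m} - W \<Longrightarrow> even (card {i\<in>W. j < i} + card {i\<in>E. j < i} + c)"
  shows "W \<in> cyclic_boundary_complex TYPE('n) t m"
proof -
  have fin: "finite W" "finite E"
    using finite_subset[OF W] finite_subset[OF E] by auto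
  define p where "p = smult ((-1) ^ c) ((\<Prod>i\<in>W. [:- t i, 1:]) * (\<Prod>i\<in>E. [:- t i, 1:]))"
  have poly_p: "poly p s = (-1) ^ c * ((\<Prod>i\<in>W. s - t i) * (\<Prod>i\<in>E. s - t i))" for s
    by (simp add: p_def poly_prod)
  have "degree p \<le> card W + card E"
    unfolding p_def
    using degree_prod_sum_le[OF fin(1), of "\<lambda>i. [:- t i, 1:]"]
      degree_prod_sum_le[OF fin(2), of "\<lambda>i. [:- t i, 1:]"]
    by (intro order.trans[OF degree_smult_le] order.trans[OF degree_mult_le] add_mono) simp_all
  then have degree: "degree p \<le> CARD('n)"
    using card by linarith
  have zero: "poly p (t i) = 0" if "i \<in> W" for i
  proof -
    have "(\<Prod>i'\<in>W. t i - t i') = 0"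
      using that by (intro prod_zero[OF fin(1)]) auto
    then show ?thesis
      by (simp add: poly_p)
  qed
  have pos: "0 < poly p (t j)" if j: "j \<in> {1..m}" "j \<notin> W" for j
  proof -
    let ?sW = "(-1::real) ^ card {i\<in>W. j < i}" and ?sE = "(-1::real) ^ card {i\<in>E. j < i}"
    let ?PW = "\<Prod>i\<in>W. t j - t i" and ?PE = "\<Prod>i\<in>E. t j - t i"
    have signs: "0 < ?sW * ?PW" "0 < ?sE * ?PE"
      using sign_prod_diff_pos[OF mono fin(1) W j] sign_prod_diff_pos[OF mono fin(2) _ j(1)] W E j(2)
      by auto
    have "(-1::real) ^ (card {i\<in>W. j < i} + card {i\<in>E. j < i} + c) = 1"
      using parity j by simp
    then have "poly p (t j)
        = (-1) ^ (card {i\<in>W. j < i} + card {i\<in>E. j < i} + c) * ((-1) ^ c * (?PW * ?PE))"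
      by (simp add: poly_p)
    also have "\<dots> = (?sW * ?PW) * (?sE * ?PE) * ((-1) ^ c * (-1) ^ c)"
      by (simp add: power_add mult_ac)
    also have "(-1::real) ^ c * (-1) ^ c = 1"
      by (simp flip: power_add)
    finally show ?thesis
      using signs by simp
  qed
  show ?thesis
    by (rule supporting_poly_cyclic_face[OF degree W j0]) (use zero pos in auto)
qed

section \<open>Sparse sets, obstructions and Gale evenness\<close>

definition sparse :: "nat set \<Rightarrow> bool" where
  "sparse S \<longleftrightarrow> (\<forall>x\<in>S. \<forall>y\<in>S. x < y \<longrightarrow> x + 2 \<le> y)"

text \<open>The supports of the generators of \<open>I\<^sub>a\<^sub>,\<^sub>2\<^sub>,\<^sub>m\<^sub>-\<^sub>1\<close> and of \<open>x\<^sub>1 x\<^sub>m I\<^sub>a\<^sub>-\<^sub>1\<^sub>,\<^sub>3\<^sub>,\<^sub>m\<^sub>-\<^sub>2\<close>.\<close>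
definition obstructions :: "nat \<Rightarrow> nat \<Rightarrow> nat set set" where
  "obstructions a m =
     {S. S \<subseteq> {2..m - 1} \<and> card S = a \<and> sparse S} \<union>
     {insert 1 (insert m S) | S. S \<subseteq> {3..m - 2} \<and> card S = a - 1 \<and> sparse S}"

lemma sparse_subset: "sparse S \<Longrightarrow> T \<subseteq> S \<Longrightarrow> sparse T"
  unfolding sparse_def by blast

lemma card_sparse_Un_Suc_image:
  assumes "finite S" "sparse S"
  shows "card (S \<union> Suc ` S) = 2 * card S"
proof -
  have "S \<inter> Suc ` S = {}"
    using assms(2) unfolding sparse_def by force
  then show ?thesis
    using assms(1) by (simp add: card_Un_disjoint card_image)
qed

lemma even_card_greater_sparse_Un_Suc_image:
  assumes "finite S" "sparse S" "k \<notin> S"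
  shows "even (card {l\<in>S \<union> Suc ` S. k < l})"
proof -
  have "{l\<in>S \<union> Suc ` S. k < l} = {s\<in>S. k < s} \<union> Suc ` {s\<in>S. k < s}"
    using assms(3) by (auto simp: image_iff less_Suc_eq)
  moreover have "sparse {s\<in>S. k < s}"
    using assms(2) by (rule sparse_subset) blast
  ultimately show ?thesis
    using card_sparse_Un_Suc_image assms(1) by simp
qed

text \<open>The nodes are a sparse set \<open>S\<close> and its right neighbours \<open>Suc ` S\<close>, completed by the node
  just below \<open>S\<close>, resp. by the nodes \<open>1, 2, m\<close>: every node outside \<open>W\<close> then has an even,
  resp. odd, number of nodes above it.\<close>
lemma obstruction_alternating_nodes:
  assumes "P \<in> obstructions a m" "P \<subseteq> W" "1 \<le> a" "3 \<le> m"
  obtains K c where "K \<subseteq> {1..m}" "card K = 2 * a + 1"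
    "\<And>k. k \<in> K - W \<Longrightarrow> even (card {l\<in>K. k < l} + c)"
proof -
  from assms(1) consider
      (interior) "P \<subseteq> {2..m - 1}" "card P = a" "sparse P"
    | (ends) S where "P = insert 1 (insert m S)" "S \<subseteq> {3..m - 2}" "card S = a - 1" "sparse S"
    unfolding obstructions_def by blast
  then show thesis
  proof cases
    case interior
    define S where "S = P"
    have interior: "S \<subseteq> W \<inter> {2..m - 1}" "card S = a" "sparse S"
      using interior assms(2) unfolding S_def by auto
    have fin: "finite S"
      using interior(1) finite_subset by blast
    have "S \<noteq> {}"
      using interior(2) assms(3) by auto
    then have \<mu>: "Min S \<in> S" "\<And>s. s \<in> S \<Longrightarrow> Min S \<le> s"
      using fin by auto
    have range: "2 \<le> s \<and> s \<le> m - 1" if "s \<in> S" for s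
      using interior(1) that by auto
    define K where "K = insert (Min S - 1) (S \<union> Suc ` S)"
    have "Min S - 1 \<notin> S \<union> Suc ` S"
      using \<mu> range[OF \<mu>(1)] by force
    then have "card K = 2 * a + 1"
      unfolding K_def using card_sparse_Un_Suc_image[OF fin interior(3)] fin interior(2) by simp
    moreover have "K \<subseteq> {1..m}"
      unfolding K_def using range \<mu> by force
    moreover have "even (card {l\<in>K. k < l} + 0)" if k: "k \<in> K - W" for k
    proof -
      have "k \<notin> S" "Min S - 1 \<le> k"
        using k interior(1) \<mu> unfolding K_def by force+
      then have "{l\<in>K. k < l} = {l\<in>S \<union> Suc ` S. k < l}"
        unfolding K_def by auto
      then show ?thesis
        using even_card_greater_sparse_Un_Suc_image[OF fin interior(3) \<open>k \<notin> S\<close>] by simp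
    qed
    ultimately show thesis
      using that by blast
  next
    case ends
    then have ends: "S \<subseteq> W \<inter> {3..m - 2}" "card S = a - 1" "sparse S" "1 \<in> W" "m \<in> W"
      using assms(2) by auto
    have fin: "finite S"
      using ends(1) finite_subset by blast
    have range: "3 \<le> s \<and> s \<le> m - 2" if "s \<in> S" for s
      using ends(1) that by auto
    define K where "K = {1, 2, m} \<union> (S \<union> Suc ` S)"
    have "{1, 2, m} \<inter> (S \<union> Suc ` S) = {}"
      using range by force
    then have "card K = card {1, 2, m} + card (S \<union> Suc ` S)"
      unfolding K_def using fin by (intro card_Un_disjoint) auto
    moreover have "card {1, 2, m} = 3"
      using assms(4) by simp
    ultimately have "card K = 2 * a + 1"
      using card_sparse_Un_Suc_image[OF fin ends(3)] ends(2) assms(3) by simp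
    moreover have K: "K \<subseteq> {1..m}"
      unfolding K_def using range assms(4) by force
    moreover have "even (card {l\<in>K. k < l} + 1)" if k: "k \<in> K - W" for k
    proof -
      have "k \<notin> S" "k \<noteq> 1" "k \<noteq> m" "k \<in> {1..m}"
        using k ends K by auto
      then have "{l\<in>K. k < l} = insert m {l\<in>S \<union> Suc ` S. k < l}"
        unfolding K_def by auto
      moreover have "m \<notin> S \<union> Suc ` S"
        using range by force
      ultimately have "card {l\<in>K. k < l} = Suc (card {l\<in>S \<union> Suc ` S. k < l})"
        using fin by simp
      then show ?thesis
        using even_card_greater_sparse_Un_Suc_image[OF fin ends(3) \<open>k \<notin> S\<close>] by simp
    qed
    ultimately show thesis
      using that by blast
  qed
qed

text \<open>\<open>odd_in_run X i\<close> holds iff \<open>i\<close> is the first, third, fifth, \<dots> element of its maximal run of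
  consecutive elements of \<open>X\<close>.\<close>
fun odd_in_run :: "nat set \<Rightarrow> nat \<Rightarrow> bool" where
  "odd_in_run X 0 = False"
| "odd_in_run X (Suc i) = (Suc i \<in> X \<and> \<not> odd_in_run X i)"

definition odd_run_ends :: "nat set \<Rightarrow> nat set" where
  "odd_run_ends X = {i. odd_in_run X i \<and> Suc i \<notin> X}"

lemma odd_in_run_mem: "odd_in_run X i \<Longrightarrow> i \<in> X"
  by (cases i) auto

lemma odd_run_ends_subset: "odd_run_ends X \<subseteq> {i. odd_in_run X i}"
  unfolding odd_run_ends_def by blast

lemma sparse_odd_in_run: "sparse {i. odd_in_run X i}"
  unfolding sparse_def
proof (intro ballI impI)
  fix x y assume "x \<in> {i. odd_in_run X i}" "y \<in> {i. odd_in_run X i}" "x < y"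
  then have "y \<noteq> Suc x"
    by auto
  then show "x + 2 \<le> y"
    using \<open>x < y\<close> by simp
qed

lemma card_Int_greaterThanAtMost_Suc:
  "j \<le> n \<Longrightarrow> card (A \<inter> {j<..Suc n}) = card (A \<inter> {j<..n}) + (if Suc n \<in> A then 1 else 0)"
proof -
  assume "j \<le> n"
  then have "A \<inter> {j<..Suc n} = (if Suc n \<in> A then insert (Suc n) (A \<inter> {j<..n}) else A \<inter> {j<..n})"
    by (auto simp: le_Suc_eq)
  then show ?thesis
    by simp
qed

text \<open>The correction term accounts for an odd run cut off at \<open>j + k\<close>.\<close>
lemma odd_in_run_count:
  assumes "j \<notin> X"
  shows "int (card (X \<inter> {j<..j + k})) + int (card (odd_run_ends X \<inter> {j<..j + k}))
    = 2 * int (card ({i. odd_in_run X i} \<inter> {j<..j + k}))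
      - (if odd_in_run X (j + k) \<and> Suc (j + k) \<in> X then 1 else 0)"
proof (induction k)
  case 0
  have "\<not> odd_in_run X j"
    using assms odd_in_run_mem by blast
  then show ?case
    by simp
next
  case (Suc k)
  show ?case
    unfolding add_Suc_right card_Int_greaterThanAtMost_Suc[OF le_add1] using Suc.IH
    by (cases "odd_in_run X (j + k)"; cases "Suc (j + k) \<in> X"; cases "Suc (Suc (j + k)) \<in> X")
      (auto simp: odd_run_ends_def)
qed

lemma odd_in_run_count_between:
  assumes "j \<notin> X" "j' \<notin> X" "j < j'"
  shows "card (X \<inter> {j<..<j'}) + card (odd_run_ends X \<inter> {j<..<j'})
    = 2 * card ({i. odd_in_run X i} \<inter> {j<..<j'})"
proof -
  define k where "k = j' - Suc j"
  have "Suc (j + k) = j'" "{j<..j + k} = {j<..<j'}"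
    using assms(3) unfolding k_def by auto
  then show ?thesis
    using odd_in_run_count[OF assms(1), of k] assms(2) by simp
qed

lemma card_odd_run_ends:
  assumes "X \<subseteq> {1..n}"
  shows "card X + card (odd_run_ends X) = 2 * card {i. odd_in_run X i}"
proof -
  have X: "X \<subseteq> {0<..<Suc n}"
    using assms by auto
  moreover have "{i. odd_in_run X i} \<subseteq> X"
    using odd_in_run_mem by blast
  ultimately have "X \<inter> {0<..<Suc n} = X" "odd_run_ends X \<inter> {0<..<Suc n} = odd_run_ends X"
      "{i. odd_in_run X i} \<inter> {0<..<Suc n} = {i. odd_in_run X i}"
    using odd_run_ends_subset by blast+
  moreover have "0 \<notin> X" "Suc n \<notin> X"
    using X by auto
  ultimately show ?thesis
    using odd_in_run_count_between[of 0 X "Suc n"] by simp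
qed

lemma card_greater_split:
  fixes A :: "nat set"
  assumes "finite A" "j < j'" "j' \<notin> A"
  shows "card {i\<in>A. j < i} = card {i\<in>A. j' < i} + card (A \<inter> {j<..<j'})"
proof -
  have "{i\<in>A. j < i} = {i\<in>A. j' < i} \<union> A \<inter> {j<..<j'}"
    using assms(2,3) by (auto simp: not_less order.order_iff_strict)
  moreover have "{i\<in>A. j' < i} \<inter> (A \<inter> {j<..<j'}) = {}"
    by auto
  ultimately show ?thesis
    using assms(1) by (simp add: card_Un_disjoint)
qed

lemma even_card_greater_gaps:
  assumes W: "W \<subseteq> {1..m}" and E: "E \<subseteq> odd_run_ends (W \<inter> {2..m - 1})"
    and ends: "odd_run_ends (W \<inter> {2..m - 1}) \<inter> {j<..<j'} \<subseteq> E"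
    and j: "j \<in> {1..m} - W" "j' \<in> {1..m} - W" "j < j'"
  shows "even (card {i\<in>W. j < i} + card {i\<in>E. j < i} + (card {i\<in>W. j' < i} + card {i\<in>E. j' < i}))"
proof -
  define X where "X = W \<inter> {2..m - 1}"
  have "E \<subseteq> W"
    using E odd_run_ends_subset odd_in_run_mem by blast
  then have fin: "finite W" "finite E"
    using finite_subset[OF W] finite_subset by auto
  have "card {i\<in>W. j < i} + card {i\<in>E. j < i}
      = card {i\<in>W. j' < i} + card {i\<in>E. j' < i} + (card (W \<inter> {j<..<j'}) + card (E \<inter> {j<..<j'}))"
    using card_greater_split[OF fin(1) j(3)] card_greater_split[OF fin(2) j(3)] j(2) \<open>E \<subseteq> W\<close>
    by auto
  moreover have "W \<inter> {j<..<j'} = X \<inter> {j<..<j'}"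
    using j unfolding X_def by auto
  moreover have "E \<inter> {j<..<j'} = odd_run_ends X \<inter> {j<..<j'}"
    using E ends unfolding X_def by blast
  moreover have "j \<notin> X" "j' \<notin> X"
    using j unfolding X_def by auto
  ultimately show ?thesis
    using odd_in_run_count_between[of j X j'] j(3) by simp
qed

lemma obstruction_free_not_full:
  assumes "\<not> (\<exists>P\<in>obstructions a m. P \<subseteq> W)" "2 * a + 1 \<le> m"
  shows "\<not> {1..m} \<subseteq> W"
proof
  assume full: "{1..m} \<subseteq> W"
  let ?S = "(\<lambda>i. 2 * i) ` {1..a}"
  have "?S \<in> obstructions a m"
    using assms(2) by (auto simp: obstructions_def sparse_def card_image inj_on_def)
  moreover have "?S \<subseteq> W"
    using assms(2) full by auto
  ultimately show False
    using assms(1) by blast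
qed

lemma obstruction_free_card_odd_in_run:
  assumes "\<not> (\<exists>P\<in>obstructions a m. P \<subseteq> W)" "1 \<le> a"
  shows "card {i. odd_in_run (W \<inter> {2..m - 1}) i} \<le> a - 1"
proof (rule ccontr)
  assume "\<not> ?thesis"
  then have "a \<le> card {i. odd_in_run (W \<inter> {2..m - 1}) i}"
    using assms(2) by linarith
  then obtain S where S: "S \<subseteq> {i. odd_in_run (W \<inter> {2..m - 1}) i}" "card S = a"
    by (rule obtain_subset_with_card_n)
  have "sparse S"
    using sparse_odd_in_run S(1) by (rule sparse_subset)
  moreover have "S \<subseteq> W \<inter> {2..m - 1}"
    using S(1) odd_in_run_mem by blast
  ultimately have "S \<in> obstructions a m" "S \<subseteq> W"
    using S(2) unfolding obstructions_def by auto
  then show False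
    using assms(1) by blast
qed

lemma inj_on_spreading:
  fixes f :: "nat \<Rightarrow> nat"
  assumes "\<And>i i'. i \<in> S \<Longrightarrow> i' \<in> S \<Longrightarrow> i < i' \<Longrightarrow> f i + 2 \<le> f i'"
  shows "inj_on f S"
proof (rule inj_onI)
  fix i i' assume "i \<in> S" "i' \<in> S" "f i = f i'"
  then show "i = i'"
    using assms[of i i'] assms[of i' i] by (cases i i' rule: linorder_cases) auto
qed

lemma sparse_image:
  fixes f :: "nat \<Rightarrow> nat"
  assumes "\<And>i i'. i \<in> S \<Longrightarrow> i' \<in> S \<Longrightarrow> i < i' \<Longrightarrow> f i + 2 \<le> f i'"
  shows "sparse (f ` S)"
  unfolding sparse_def
proof (intro ballI impI)
  fix x y assume "x \<in> f ` S" "y \<in> f ` S" "x < y"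
  then obtain i i' where "i \<in> S" "i' \<in> S" "x = f i" "y = f i'"
    by blast
  then show "x + 2 \<le> y"
    using assms[of i i'] assms[of i' i] \<open>x < y\<close> by (cases i i' rule: linorder_cases) auto
qed

text \<open>Shift the odd positions below the gap \<open>g\<close> one step to the right.\<close>
lemma odd_in_run_shift:
  assumes W: "1 \<in> W" "m \<in> W" and g: "g \<in> {1..m} - W"
    and ends: "\<And>e. e \<in> odd_run_ends (W \<inter> {2..m - 1}) \<Longrightarrow> g < e \<and> e \<noteq> m - 1"
  obtains S where "S \<subseteq> W \<inter> {3..m - 2}" "card S = card {i. odd_in_run (W \<inter> {2..m - 1}) i}" "sparse S"
proof -
  define X where "X = W \<inter> {2..m - 1}"
  define G where "G = {i. odd_in_run X i}"
  define f where "f i = (if i < g then Suc i else i)" for i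
  have "2 \<le> g" "g < m"
    using g W by (auto simp: le_less)
  have G: "i \<in> W" "2 \<le> i" "i \<le> m - 1" "odd_in_run X i" if "i \<in> G" for i
    using that odd_in_run_mem[of X i] unfolding G_def X_def by auto
  have shifted: "Suc i \<in> W" "Suc i < g" if "i \<in> G" "i < g" for i
  proof -
    have "Suc i \<in> X"
      using ends[of i] G(4)[OF that(1)] that(2) unfolding odd_run_ends_def X_def by auto
    then show "Suc i \<in> W"
      unfolding X_def by blast
    then show "Suc i < g"
      using g that(2) by (cases "Suc i = g") auto
  qed
  have unshifted: "g < i" "i \<le> m - 2" if "i \<in> G" "\<not> i < g" for i
  proof -
    show "g < i"
      using that g G(1)[OF that(1)] by (cases "i = g") auto
    have "i \<noteq> m - 1"
    proof
      assume "i = m - 1"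
      then have "i \<in> odd_run_ends X"
        using G(4)[OF that(1)] \<open>g < m\<close> unfolding odd_run_ends_def X_def by auto
      then show False
        using ends[of i] \<open>i = m - 1\<close> unfolding X_def by blast
    qed
    then show "i \<le> m - 2"
      using G(3)[OF that(1)] by simp
  qed
  have "f i \<in> W \<inter> {3..m - 2}" if "i \<in> G" for i
    using shifted[OF that] unshifted[OF that] G[OF that] \<open>2 \<le> g\<close> \<open>g < m\<close>
    unfolding f_def by (cases "i < g") auto
  moreover have spread: "f i + 2 \<le> f i'" if "i \<in> G" "i' \<in> G" "i < i'" for i i'
  proof -
    have "i + 2 \<le> i'"
      using sparse_odd_in_run[of X] that unfolding G_def sparse_def by blast
    then show ?thesis
      using shifted[OF that(1)] unshifted[OF that(2)] unfolding f_def by auto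
  qed
  ultimately show thesis
    using that[of "f ` G"] card_image[OF inj_on_spreading] sparse_image
    unfolding G_def X_def by blast
qed

text \<open>When the bound on the odd positions is attained and \<open>1, m \<in> W\<close>, the shift produces an
  obstruction unless some odd run ends before the first gap or at \<open>m - 1\<close>.\<close>
lemma obstruction_free_outer_run_end:
  assumes free: "\<not> (\<exists>P\<in>obstructions a m. P \<subseteq> W)" and W: "1 \<in> W" "m \<in> W"
    and gap: "j0 \<in> {1..m} - W"
    and card_odd: "card {i. odd_in_run (W \<inter> {2..m - 1}) i} = a - 1"
  obtains e where "e \<in> odd_run_ends (W \<inter> {2..m - 1})"
    "(\<forall>j\<in>{1..m} - W. e < j) \<or> (\<forall>j\<in>{1..m} - W. j < e)"
proof -
  define g where "g = Min ({1..m} - W)"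
  have g: "g \<in> {1..m} - W"
    unfolding g_def using gap by (intro Min_in) auto
  have first_gap: "g \<le> j" if "j \<in> {1..m} - W" for j
    unfolding g_def using that by simp
  show thesis
  proof (cases "\<exists>e \<in> odd_run_ends (W \<inter> {2..m - 1}). e < g \<or> e = m - 1")
    case True
    then obtain e where e: "e \<in> odd_run_ends (W \<inter> {2..m - 1})" "e < g \<or> e = m - 1"
      by blast
    then have "e \<in> W"
      using odd_in_run_mem unfolding odd_run_ends_def by blast
    have "(\<forall>j\<in>{1..m} - W. e < j) \<or> (\<forall>j\<in>{1..m} - W. j < e)"
    proof (cases "e < g")
      case True
      then show ?thesis
        using first_gap by (meson order.strict_trans2)
    next
      case False
      then have "e = m - 1"
        using e(2) by blast
      then have "j < e" if "j \<in> {1..m} - W" for j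
        using that \<open>e \<in> W\<close> W(2) by (cases "j = m"; cases "j = e") auto
      then show ?thesis
        by blast
    qed
    then show thesis
      using that e(1) by blast
  next
    case False
    have late: "g < e \<and> e \<noteq> m - 1" if "e \<in> odd_run_ends (W \<inter> {2..m - 1})" for e
    proof -
      have "e \<in> W"
        using that odd_in_run_mem unfolding odd_run_ends_def by blast
      then show ?thesis
        using False that g by (cases "e = g") auto
    qed
    obtain S where S: "S \<subseteq> W \<inter> {3..m - 2}" "card S = card {i. odd_in_run (W \<inter> {2..m - 1}) i}"
      "sparse S"
      by (rule odd_in_run_shift[OF W g late]) blast
    then have "insert 1 (insert m S) \<in> obstructions a m" "insert 1 (insert m S) \<subseteq> W"
      using W card_odd unfolding obstructions_def by auto
    then show thesis
      using free by blast
  qed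
qed

text \<open>Gale's evenness condition: \<open>E\<close> consists of the odd run ends of the interior part of \<open>W\<close>,
  minus possibly one of them lying outside all gaps of \<open>W\<close>.\<close>
lemma obstruction_free_gale_parity:
  assumes free: "\<not> (\<exists>P\<in>obstructions a m. P \<subseteq> W)" and W: "W \<subseteq> {1..m}"
    and a: "1 \<le> a" "2 * a + 1 \<le> m"
  obtains E c j0 where "E \<subseteq> W" "card W + card E \<le> 2 * a - 1" "j0 \<in> {1..m} - W"
    "\<And>j. j \<in> {1..m} - W \<Longrightarrow> even (card {i\<in>W. j < i} + card {i\<in>E. j < i} + c)"
proof -
  obtain j0 where j0: "j0 \<in> {1..m} - W"
    using obstruction_free_not_full[OF free a(2)] W by blast
  define X where "X = W \<inter> {2..m - 1}"
  define L where "L = odd_run_ends X"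
  have L: "L \<subseteq> W" "finite L"
    using odd_run_ends_subset odd_in_run_mem finite_subset[OF _ finite_subset[OF W]]
    unfolding L_def X_def by blast+
  have card_G: "card {i. odd_in_run X i} \<le> a - 1"
    unfolding X_def using free a(1) by (rule obstruction_free_card_odd_in_run)
  have card_L: "card X + card L = 2 * card {i. odd_in_run X i}"
    unfolding L_def X_def by (rule card_odd_run_ends[of _ m]) auto
  have card_W: "card W = card X + card (W - {2..m - 1})"
    unfolding X_def using finite_subset[OF W] by (rule card_Int_Diff) simp
  have ends: "W - {2..m - 1} \<subseteq> {1, m}"
    using W by (auto simp: subset_iff)
  have "card {1::nat, m} \<le> 2"
    by (cases "m = 1") auto
  then have card_ends: "card (W - {2..m - 1}) \<le> 2"
    using card_mono[OF _ ends] by simp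
  obtain E where E: "E \<subseteq> L" "card W + card E \<le> 2 * a - 1"
    "\<And>j j'. j \<in> {1..m} - W \<Longrightarrow> j' \<in> {1..m} - W \<Longrightarrow> L \<inter> {j<..<j'} \<subseteq> E"
  proof (cases "1 \<in> W \<and> m \<in> W \<and> card {i. odd_in_run X i} = a - 1")
    case True
    then obtain e where e: "e \<in> L" "(\<forall>j\<in>{1..m} - W. e < j) \<or> (\<forall>j\<in>{1..m} - W. j < e)"
      using obstruction_free_outer_run_end[OF free _ _ j0] unfolding L_def X_def by blast
    then have "card W + card (L - {e}) \<le> 2 * a - 1"
      using card_ends card_W card_L True L(2) a(1) card_gt_0_iff[of L]
      by (auto simp: card_Diff_singleton)
    moreover have "L \<inter> {j<..<j'} \<subseteq> L - {e}" if "j \<in> {1..m} - W" "j' \<in> {1..m} - W" for j j'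
    proof -
      have "e < j \<or> j' < e"
        using e(2) that by blast
      then show ?thesis
        by auto
    qed
    ultimately show thesis
      by (rule that[of "L - {e}", OF Diff_subset])
  next
    case False
    have "card W + card L = 2 * card {i. odd_in_run X i} + card (W - {2..m - 1})"
      using card_W card_L by simp
    also have "\<dots> \<le> 2 * a - 1"
    proof (cases "1 \<in> W \<and> m \<in> W")
      case True
      then show ?thesis
        using False card_G card_ends a(1) by linarith
    next
      case False
      then have "W - {2..m - 1} \<subseteq> {1} \<or> W - {2..m - 1} \<subseteq> {m}"
        using ends by blast
      then have "card (W - {2..m - 1}) \<le> 1"
        using card_mono[of "{1}" "W - {2..m - 1}"] card_mono[of "{m}" "W - {2..m - 1}"] by auto
      then show ?thesis
        using card_G a(1) by linarith
    qed
    finally show thesis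
      by (rule that[OF order_refl]) simp
  qed
  define N where "N j = card {i\<in>W. j < i} + card {i\<in>E. j < i}" for j
  have "even (N j + N j0)" if "j \<in> {1..m} - W" for j
    using even_card_greater_gaps[OF W, of E] E(1,3) that j0 unfolding L_def X_def N_def
    by (cases j j0 rule: linorder_cases) (simp_all add: add.commute)
  then show thesis
    using that[of E] E(1,2) L(1) j0 unfolding N_def by blast
qed

section \<open>The Stanley--Reisner ideal\<close>

lemma sqf_monomial_eq_single:
  "finite T \<Longrightarrow> (sqf_monomial T :: 'k::comm_ring_1 mpoly)
    = Poly_Mapping.single (\<Sum>t\<in>T. Poly_Mapping.single t 1) 1"
  unfolding sqf_monomial_def
proof (induction T rule: finite_induct)
  case empty
  then show ?case
    by (simp add: one_poly_mapping.abs_eq single.abs_eq)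
next
  case (insert x F)
  then show ?case
    by (simp add: pvar_def mult_single)
qed

lemma keys_sum_single: "finite T \<Longrightarrow> Poly_Mapping.keys (\<Sum>t\<in>T. Poly_Mapping.single t (1::nat)) \<subseteq> T"
proof (induction T rule: finite_induct)
  case (insert x F)
  then show ?case
    using keys_add[of "Poly_Mapping.single x (1::nat)" "\<Sum>t\<in>F. Poly_Mapping.single t 1"] by auto
qed simp

lemma sqf_monomial_in_carrier:
  "T \<subseteq> {1..m} \<Longrightarrow> (sqf_monomial T :: 'k::field mpoly) \<in> carrier (poly_ring_m m)"
  using finite_subset[of T "{1..m}"] keys_sum_single[of T]
  by (auto simp: poly_ring_m_def sqf_monomial_eq_single)

lemma stanley_reisner_ideal_eq_genideal:
  assumes nonface: "\<And>W. W \<subseteq> {1..m} \<Longrightarrow> W \<notin> \<Delta> \<longleftrightarrow> (\<exists>P\<in>\<P>. P \<subseteq> W)"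
    and \<P>: "\<And>P. P \<in> \<P> \<Longrightarrow> P \<subseteq> {1..m}"
  shows "stanley_reisner_ideal m \<Delta> = genideal (poly_ring_m m) (sqf_monomial ` \<P> :: 'k::field mpoly set)"
proof -
  let ?R = "poly_ring_m m :: 'k mpoly ring"
  let ?X = "{sqf_monomial W | W. W \<subseteq> {1..m} \<and> W \<notin> \<Delta>} :: 'k mpoly set"
  have "?X \<subseteq> I \<longleftrightarrow> sqf_monomial ` \<P> \<subseteq> I" if I: "ideal I ?R" for I
  proof
    assume "?X \<subseteq> I"
    then show "sqf_monomial ` \<P> \<subseteq> I"
      using nonface \<P> by blast
  next
    assume gen: "sqf_monomial ` \<P> \<subseteq> I"
    show "?X \<subseteq> I"
    proof
      fix x assume "x \<in> ?X"
      then obtain W where W: "x = sqf_monomial W" "W \<subseteq> {1..m}" "W \<notin> \<Delta>"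
        by blast
      then obtain P where P: "P \<in> \<P>" "P \<subseteq> W"
        using nonface by blast
      have "finite W"
        using W(2) finite_subset by blast
      then have "x = sqf_monomial P \<otimes>\<^bsub>?R\<^esub> sqf_monomial (W - P)"
        using W(1) P(2) unfolding sqf_monomial_def
        by (simp add: poly_ring_m_def prod.subset_diff mult.commute)
      moreover have "sqf_monomial (W - P) \<in> carrier ?R"
        using W(2) by (intro sqf_monomial_in_carrier) blast
      ultimately show "x \<in> I"
        using ideal.I_r_closed[OF I] gen P(1) by blast
    qed
  qed
  then show ?thesis
    unfolding stanley_reisner_ideal_def genideal_def by (intro arg_cong[where f = Inter]) blast
qed

lemma kalg_iso_quot_refl: "kalg_iso_quot m I I"
  unfolding kalg_iso_quot_def by (rule bexI[of _ id]) (auto simp: ring_iso_def ring_hom_def)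

lemma obstruction_subset: "1 \<le> m \<Longrightarrow> P \<in> obstructions a m \<Longrightarrow> P \<subseteq> {1..m}"
  unfolding obstructions_def by (force simp: subset_iff)

lemma gens_I_eq_image:
  "gens_I a p q = sqf_monomial ` {S. S \<subseteq> {p..q} \<and> card S = a \<and> sparse S}"
  unfolding gens_I_def sparse_def by blast

lemma sqf_monomial_obstructions:
  assumes "3 \<le> m"
  shows "sqf_monomial ` obstructions a m
    = gens_I a 2 (m - 1) \<union> {pvar 1 * pvar m * g | g. g \<in> gens_I (a - 1) 3 (m - 2)}"
proof -
  have ends: "sqf_monomial (insert 1 (insert m S)) = pvar 1 * pvar m * sqf_monomial S"
    if "S \<subseteq> {3..m - 2}" for S
  proof -
    have "finite S" "1 \<notin> S" "m \<notin> S" "m \<noteq> 1"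
      using that assms finite_subset by auto
    then show ?thesis
      unfolding sqf_monomial_def by (simp add: mult.assoc)
  qed
  define \<S> where "\<S> = {S. S \<subseteq> {3..m - 2} \<and> card S = a - 1 \<and> sparse S}"
  have "sqf_monomial ` {insert 1 (insert m S) | S. S \<subseteq> {3..m - 2} \<and> card S = a - 1 \<and> sparse S}
      = (\<lambda>S. sqf_monomial (insert 1 (insert m S))) ` \<S>"
    unfolding \<S>_def by blast
  also have "\<dots> = (\<lambda>g. pvar 1 * pvar m * g) ` sqf_monomial ` \<S>"
    unfolding image_image using ends by (intro image_cong) (auto simp: \<S>_def)
  also have "\<dots> = {pvar 1 * pvar m * g | g. g \<in> gens_I (a - 1) 3 (m - 2)}"
    unfolding gens_I_eq_image \<S>_def by blast
  finally have ends_image: "sqf_monomial ` {insert 1 (insert m S) | S. S \<subseteq> {3..m - 2} \<and> card S = a - 1 \<and> sparse S}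
      = {pvar 1 * pvar m * g | g. g \<in> gens_I (a - 1) 3 (m - 2)}" .
  show ?thesis
    unfolding obstructions_def image_Un ends_image gens_I_eq_image ..
qed

lemma cyclic_boundary_complex_iff_obstruction_free:
  fixes t :: "nat \<Rightarrow> real"
  assumes card: "CARD('n::finite) = 2 * a - 1" and a: "1 \<le> a" "2 * a + 1 \<le> m"
    and mono: "strict_mono_on {1..m} t" and W: "W \<subseteq> {1..m}"
  shows "W \<in> cyclic_boundary_complex TYPE('n) t m \<longleftrightarrow> \<not> (\<exists>P\<in>obstructions a m. P \<subseteq> W)"
proof
  assume face: "W \<in> cyclic_boundary_complex TYPE('n) t m"
  show "\<not> (\<exists>P\<in>obstructions a m. P \<subseteq> W)"
  proof
    assume "\<exists>P\<in>obstructions a m. P \<subseteq> W"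
    then obtain P where P: "P \<in> obstructions a m" "P \<subseteq> W"
      by blast
    have "3 \<le> m"
      using a by linarith
    obtain K c where K: "K \<subseteq> {1..m}" "card K = 2 * a + 1"
      "\<And>k. k \<in> K - W \<Longrightarrow> even (card {l\<in>K. k < l} + c)"
      by (rule obstruction_alternating_nodes[OF P a(1) \<open>3 \<le> m\<close>]) blast
    have "CARD('n) + 2 \<le> card K"
      using card K(2) a(1) by simp
    then show False
      using cyclic_face_not_alternating[OF mono face K(1)] K(3) by blast
  qed
next
  assume free: "\<not> (\<exists>P\<in>obstructions a m. P \<subseteq> W)"
  obtain E c j0 where E: "E \<subseteq> W" "card W + card E \<le> 2 * a - 1" "j0 \<in> {1..m} - W"
    "\<And>j. j \<in> {1..m} - W \<Longrightarrow> even (card {i\<in>W. j < i} + card {i\<in>E. j < i} + c)"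
    by (rule obstruction_free_gale_parity[OF free W a]) blast
  show "W \<in> cyclic_boundary_complex TYPE('n) t m"
    using E(2) card by (intro gale_parity_cyclic_face[OF mono W E(1) _ E(3) E(4)]) simp_all
qed

theorem proposition4p1:
  fixes t :: "nat \<Rightarrow> real" and d m a :: nat
  assumes "d = CARD('n::finite)"
    and "odd d" and "5 \<le> d" and "d < m - 1"
    and "strict_mono_on {1..m} t"
    and "a = (d + 1) div 2"
  shows "kalg_iso_quot m
           (stanley_reisner_ideal m (cyclic_boundary_complex TYPE('n) t m) :: 'k::field mpoly set)
           (genideal (poly_ring_m m)
              (gens_I a 2 (m - 1) \<union> {pvar 1 * pvar m * g | g. g \<in> gens_I (a - 1) 3 (m - 2)}))"
proof -
  have card: "CARD('n) = 2 * a - 1" and a: "1 \<le> a" "2 * a + 1 \<le> m"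
    using assms(1-4,6) by (auto elim: oddE)
  have "stanley_reisner_ideal m (cyclic_boundary_complex TYPE('n) t m)
      = genideal (poly_ring_m m) (sqf_monomial ` obstructions a m :: 'k mpoly set)"
    using cyclic_boundary_complex_iff_obstruction_free[OF card a assms(5)] obstruction_subset a
    by (intro stanley_reisner_ideal_eq_genideal) auto
  also have "sqf_monomial ` obstructions a m
      = gens_I a 2 (m - 1) \<union> {pvar 1 * pvar m * g | g. g \<in> gens_I (a - 1) 3 (m - 2)}"
    using a by (intro sqf_monomial_obstructions) simp
  finally show ?thesis
    by (simp add: kalg_iso_quot_refl)
qed

end
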